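(* Let $n\ge 3$, $0<m<\frac{n-2}{n}$, $\eta_0>0$, $\rho_1>0$, let $\beta<\frac{m\rho_1}{n-2-nm}$ and $\alpha=\frac{2\beta+\rho_1}{1-m}$. Then there exists a constant $\varepsilon>0$ such that the equation $$(f^m/m)_{rr}+\frac{n-1}{r}(f^m/m)_r+\alpha f+\beta r f_r=0,\quad f>0,$$ has a unique radially symmetric solution $f\in C^1([0,\varepsilon);\mathbb{R})\cap C^2((0,\varepsilon);\mathbb{R})$ in $B_\varepsilon$ (i.e. for $0<r<\varepsilon$) which satisfies $f(0)=\eta_0$, $f_r(0)=0$.
   Context: $B_R=\{x\in\mathbb{R}^n:|x|<R\}$; $r=|x|$ and $f_r$ is the radial derivative. *)

theory Defs
  imports "HOL-Analysis.Analysis"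
begin

definition radial_sol ::
  "nat \<Rightarrow> real \<Rightarrow> real \<Rightarrow> real \<Rightarrow> real \<Rightarrow> real \<Rightarrow> (real \<Rightarrow> real) \<Rightarrow> bool" where
  "radial_sol n m alpha beta eta0 eps f \<longleftrightarrow>
     (\<forall>r\<in>{0..<eps}. f r > 0) \<and>
     (\<exists>f' f''.
        (\<forall>r\<in>{0..<eps}. (f has_real_derivative f' r) (at r within {0..<eps})) \<and>
        continuous_on {0..<eps} f' \<and>
        (\<forall>r\<in>{0<..<eps}. (f' has_real_derivative f'' r) (at r)) \<and>
        continuous_on {0<..<eps} f'' \<and>
        f 0 = eta0 \<and> f' 0 = 0 \<and>
        (\<forall>r\<in>{0<..<eps}.
           deriv (deriv (\<lambda>s. f s powr m / m)) r
           + (real n - 1) / r * deriv (\<lambda>s. f s powr m / m) r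
           + alpha * f r + beta * r * f' r = 0))"

end

theory Submission
  imports Defs
begin

(*
  Multiplying the equation by r^(n-1) and writing beta r^n f_r = (beta r^n f)_r - n beta r^(n-1) f
  puts it in divergence form

    (r^(n-1) (f^m/m)_r + beta r^n f)_r = - gam r^(n-1) f,     gam = alpha - n beta.

  Integrating from 0 (the bracket vanishes there since n >= 2), radial solutions are exactly the
  positive solutions of the Volterra equation f(r) = eta0 + int_0^r slope f, where
  slope f r = f(r)^(1-m) (- beta r f(r) - gam r^(1-n) int_0^r s^(n-1) f(s) ds).
  For functions with values in [eta0/2, 3 eta0/2] this right-hand side is O(r) and Lipschitz with
  constant O(r) in the sup norm. Hence on a short interval the Picard map is a contraction, which
  gives existence; a continuity argument keeps every solution inside that band, and then the same
  Lipschitz estimate forces two solutions to coincide.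
*)

lemma abs_powr_diff_le:
  fixes a b c p :: real
  assumes "0 \<le> p" "p \<le> 1" "0 < c" "c \<le> a" "c \<le> b"
  shows "\<bar>a powr p - b powr p\<bar> \<le> c powr (p - 1) * \<bar>a - b\<bar>"
proof -
  have ordered: "\<bar>y powr p - x powr p\<bar> \<le> c powr (p - 1) * \<bar>y - x\<bar>"
    if "c \<le> x" "x < y" for x y
  proof -
    have "\<And>z. x \<le> z \<Longrightarrow> z \<le> y \<Longrightarrow> ((\<lambda>z. z powr p) has_real_derivative p * z powr (p - 1)) (at z)"
      using that assms by (intro has_real_derivative_powr) auto
    from MVT2[OF \<open>x < y\<close> this] obtain z where z: "x < z" "z < y"
      "y powr p - x powr p = (y - x) * (p * z powr (p - 1))" by blast
    have "z powr (p - 1) \<le> c powr (p - 1)"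
      using z that assms by (intro powr_mono2') auto
    then have "p * z powr (p - 1) \<le> c powr (p - 1)"
      using assms by (smt (verit) mult_left_le_one_le powr_ge_zero)
    then show ?thesis
      using z that assms by (simp add: abs_mult)
  qed
  show ?thesis
    using ordered[of a b] ordered[of b a] assms
    by (cases a b rule: linorder_cases) (auto simp: abs_minus_commute)
qed

lemma abs_diff_le_derivative_bound:
  fixes f D :: "real \<Rightarrow> real"
  assumes "0 \<le> r" and "continuous_on {0..r} f"
    and "\<And>z. z \<in> {0<..<r} \<Longrightarrow> (f has_real_derivative D z) (at z)"
    and "\<And>z. z \<in> {0<..<r} \<Longrightarrow> \<bar>D z\<bar> \<le> C"
  shows "\<bar>f r - f 0\<bar> \<le> C * r"
proof (cases "r = 0")
  case False
  then have "0 < r" using assms(1) by simp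
  have "(f has_derivative (\<lambda>h. D z * h)) (at z)" if "0 < z" "z < r" for z
    using assms(3)[of z] that by (simp add: has_field_derivative_def)
  from mvt_general[OF \<open>0 < r\<close> assms(2) this]
  obtain z where "z \<in> {0<..<r}" "\<bar>f r - f 0\<bar> \<le> \<bar>D z * r\<bar>"
    by auto
  moreover have "\<bar>D z * r\<bar> \<le> C * r"
    using assms(1,4) \<open>z \<in> {0<..<r}\<close> by (simp add: abs_mult mult_right_mono)
  ultimately show ?thesis by linarith
qed (use assms(4) in simp)

lemma abs_diff_initial_less_if_derivative_bounded:
  fixes f D :: "real \<Rightarrow> real"
  assumes cont: "continuous_on {0..<e} f"
    and deriv: "\<And>r. r \<in> {0<..<e} \<Longrightarrow> (f has_real_derivative D r) (at r)"
    and bound: "\<And>r. r \<in> {0<..<e} \<Longrightarrow> (\<forall>s\<in>{0..r}. \<bar>f s - f 0\<bar> < \<delta>) \<Longrightarrow> \<bar>D r\<bar> \<le> C"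
    and "0 < \<delta>" and small: "e * C < \<delta>"
    and r: "r \<in> {0..<e}"
  shows "\<bar>f r - f 0\<bar> < \<delta>"
proof (rule ccontr)
  assume exit: "\<not> ?thesis"
  define exits where "exits = {0..r} \<inter> (\<lambda>s. \<bar>f s - f 0\<bar>) -` {\<delta>..}"
  have "continuous_on {0..r} f"
    by (rule continuous_on_subset[OF cont]) (use r in auto)
  then have "closed exits"
    unfolding exits_def by (intro continuous_closed_preimage continuous_intros) simp_all
  moreover have "r \<in> exits"
    using exit r unfolding exits_def by auto
  ultimately have "Inf exits \<in> exits"
    by (intro closed_contains_Inf) (auto simp: exits_def intro: bdd_belowI[of _ 0])
  define t where "t = Inf exits"
  have t: "t \<in> {0..r}" "\<delta> \<le> \<bar>f t - f 0\<bar>"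
    using \<open>Inf exits \<in> exits\<close> unfolding t_def exits_def by auto
  have before_exit: "\<bar>f s - f 0\<bar> < \<delta>" if "0 \<le> s" "s < t" for s
  proof (rule ccontr)
    assume "\<not> ?thesis"
    then have "s \<in> exits" using that t unfolding exits_def by auto
    then have "t \<le> s"
      unfolding t_def by (intro cInf_lower) (auto simp: exits_def intro: bdd_belowI[of _ 0])
    with \<open>s < t\<close> show False by simp
  qed
  have "\<bar>f t - f 0\<bar> \<le> C * t"
  proof (rule abs_diff_le_derivative_bound)
    show "continuous_on {0..t} f" by (rule continuous_on_subset[OF cont]) (use t r in auto)
    fix z assume z: "z \<in> {0<..<t}"
    then show "(f has_real_derivative D z) (at z)" using deriv t r by auto
    show "\<bar>D z\<bar> \<le> C" by (rule bound) (use before_exit z t r in auto)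
  qed (use t in auto)
  also have "\<dots> \<le> C * e"
  proof (rule mult_left_mono)
    have "t \<noteq> 0" using t \<open>0 < \<delta>\<close> by auto
    then have "\<bar>D (t/2)\<bar> \<le> C" by (intro bound) (use before_exit t r in auto)
    then show "0 \<le> C" by simp
  qed (use t r in auto)
  finally show False using t small by (simp add: mult.commute)
qed

lemma eq_0_if_derivative_dominated:
  fixes h D :: "real \<Rightarrow> real"
  assumes cont: "continuous_on {0..<e} h" and "h 0 = 0"
    and deriv: "\<And>r. r \<in> {0<..<e} \<Longrightarrow> (h has_real_derivative D r) (at r)"
    and dominated: "\<And>r B. r \<in> {0<..<e} \<Longrightarrow> (\<forall>s\<in>{0..r}. \<bar>h s\<bar> \<le> B) \<Longrightarrow> \<bar>D r\<bar> \<le> L * B"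
    and small: "e * L < 1"
    and T: "T \<in> {0..<e}"
  shows "h T = 0"
proof -
  have cont_T: "continuous_on {0..T} h"
    by (rule continuous_on_subset[OF cont]) (use T in auto)
  have cont_abs: "continuous_on {0..T} (\<lambda>s. \<bar>h s\<bar>)"
    by (intro continuous_intros cont_T)
  then obtain x where x: "x \<in> {0..T}" and max: "\<forall>s\<in>{0..T}. \<bar>h s\<bar> \<le> \<bar>h x\<bar>"
    using continuous_attains_sup[OF compact_Icc _ cont_abs] T by auto
  define B where "B = \<bar>h x\<bar>"
  have "\<bar>h x\<bar> \<le> e * L * B"
  proof -
    have "\<bar>h x - h 0\<bar> \<le> (L * B) * x"
    proof (rule abs_diff_le_derivative_bound)
      show "continuous_on {0..x} h" by (rule continuous_on_subset[OF cont_T]) (use x in auto)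
      fix z assume z: "z \<in> {0<..<x}"
      then show "(h has_real_derivative D z) (at z)" using deriv x T by auto
      show "\<bar>D z\<bar> \<le> L * B" by (rule dominated) (use max z x T in \<open>auto simp: B_def\<close>)
    qed (use x in auto)
    moreover have "(L * B) * x \<le> e * L * B"
    proof (cases "x = 0")
      case False
      then have "\<bar>D (x/2)\<bar> \<le> L * B"
        by (intro dominated) (use max x T in \<open>auto simp: B_def\<close>)
      then have "0 \<le> L * B" by simp
      then have "(L * B) * x \<le> (L * B) * e" using x T by (intro mult_left_mono) auto
      then show ?thesis by (simp add: mult_ac)
    qed (use small in \<open>auto simp: B_def \<open>h 0 = 0\<close>\<close>)
    ultimately show ?thesis using \<open>h 0 = 0\<close> by simp
  qed
  then have "(1 - e * L) * B \<le> 0"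
    unfolding B_def by (simp add: algebra_simps)
  then have "B = 0"
    using small unfolding B_def by (simp add: mult_le_0_iff)
  then show ?thesis using max T unfolding B_def by auto
qed

lemma has_real_derivative_at_if_within_Ico:
  assumes "(f has_real_derivative D) (at r within {a..<b})" "r \<in> {a<..<b}"
  shows "(f has_real_derivative D) (at r)"
proof -
  have "at r within {a..<b} = at r"
    using assms(2) by (intro at_within_interior) simp
  with assms(1) show ?thesis by simp
qed

lemma has_real_derivative_powr_div:
  assumes "0 < f x" "m \<noteq> 0" "(f has_real_derivative f') (at x)"
  shows "((\<lambda>s. f s powr m / m) has_real_derivative f x powr (m - 1) * f') (at x)"
proof -
  have "((\<lambda>s. f s powr m / m) has_real_derivative m * f x powr (m - 1) * f' / m) (at x)"
    using DERIV_fun_powr[OF assms(3,1)] by (intro DERIV_cdivide) simp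
  with assms(2) show ?thesis by simp
qed

lemma radial_equation_iff_divergence_form:
  assumes "0 < s" "1 \<le> n" "(q has_real_derivative q') (at s)" "(f has_real_derivative f') (at s)"
  shows "q' + (real n - 1) / s * q s + alpha * f s + beta * s * f' = 0 \<longleftrightarrow>
    ((\<lambda>s. s ^ (n - 1) * q s + beta * s ^ n * f s) has_real_derivative
       - (alpha - real n * beta) * (s ^ (n - 1) * f s)) (at s)"
proof -
  have "((\<lambda>s. s ^ (n - 1)) has_real_derivative (real n - 1) * s ^ (n - 1) / s) (at s)"
  proof -
    have "real (n - 1) * s ^ (n - 1 - 1) = (real n - 1) * s ^ (n - 1) / s"
      using assms(1,2) by (cases "n - 1") (auto simp: of_nat_diff)
    then show ?thesis using DERIV_pow[of "n - 1" s] by simp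
  qed
  from DERIV_add[OF DERIV_mult[OF this assms(3)]
      DERIV_mult[OF DERIV_cmult[OF DERIV_pow[of n]] assms(4), of beta]]
  have "((\<lambda>s. s ^ (n - 1) * q s + beta * s ^ n * f s) has_real_derivative
      (real n - 1) * s ^ (n - 1) / s * q s + q' * s ^ (n - 1)
        + (beta * (real n * s ^ (n - Suc 0)) * f s + f' * (beta * s ^ n))) (at s)" .
  moreover have "s ^ n = s * s ^ (n - 1)"
    using assms(2) by (cases n) auto
  ultimately have "((\<lambda>s. s ^ (n - 1) * q s + beta * s ^ n * f s) has_real_derivative
      s ^ (n - 1) * (q' + (real n - 1) / s * q s + real n * beta * f s + beta * s * f')) (at s)"
    using assms(1) by (simp add: field_simps)
  with DERIV_unique have "((\<lambda>s. s ^ (n - 1) * q s + beta * s ^ n * f s) has_real_derivative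
       - (alpha - real n * beta) * (s ^ (n - 1) * f s)) (at s) \<longleftrightarrow>
    s ^ (n - 1) * (q' + (real n - 1) / s * q s + real n * beta * f s + beta * s * f')
      = - (alpha - real n * beta) * (s ^ (n - 1) * f s)"
    by (metis (no_types, lifting))
  also have "\<dots> \<longleftrightarrow> s ^ (n - 1) * (q' + (real n - 1) / s * q s + alpha * f s + beta * s * f') = 0"
    by (simp add: algebra_simps)
  also have "\<dots> \<longleftrightarrow> q' + (real n - 1) / s * q s + alpha * f s + beta * s * f' = 0"
    using assms(1) by simp
  finally show ?thesis ..
qed

section \<open>The radial flux\<close>

(*
  Up to the area of the unit sphere, ball_mass n u t is the integral of the radial function u over
  B_t. For a radial solution f, flux n beta gam f is (f^m/m)_r and slope n m beta gam f is f_r,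
  where gam = alpha - n beta. At t = 0 the quotient by 0^(n-1) is 0 by the convention x / 0 = 0,
  which is also its limit.
*)
definition ball_mass :: "nat \<Rightarrow> (real \<Rightarrow> real) \<Rightarrow> real \<Rightarrow> real" where
  "ball_mass n u t = integral {0..t} (\<lambda>s. s ^ (n - 1) * u s)"

definition flux :: "nat \<Rightarrow> real \<Rightarrow> real \<Rightarrow> (real \<Rightarrow> real) \<Rightarrow> real \<Rightarrow> real" where
  "flux n beta gam u t = - beta * t * u t - gam * (ball_mass n u t / t ^ (n - 1))"

definition slope :: "nat \<Rightarrow> real \<Rightarrow> real \<Rightarrow> real \<Rightarrow> (real \<Rightarrow> real) \<Rightarrow> real \<Rightarrow> real" where
  "slope n m beta gam u t = u t powr (1 - m) * flux n beta gam u t"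

lemma ball_mass_0 [simp]: "ball_mass n u 0 = 0"
  by (simp add: ball_mass_def)

lemma flux_0 [simp]: "flux n beta gam u 0 = 0"
  by (simp add: flux_def)

lemma slope_0 [simp]: "slope n m beta gam u 0 = 0"
  by (simp add: slope_def)

lemma ball_mass_diff:
  assumes "continuous_on {0..t} u" "continuous_on {0..t} v"
  shows "ball_mass n u t - ball_mass n v t = ball_mass n (\<lambda>s. u s - v s) t"
  unfolding ball_mass_def
  by (subst integral_diff[symmetric])
     (auto intro!: integrable_continuous_interval continuous_intros assms simp: algebra_simps)

lemma abs_ball_mass_div_le:
  assumes "0 \<le> t" "continuous_on {0..t} u" "\<And>s. s \<in> {0..t} \<Longrightarrow> \<bar>u s\<bar> \<le> B"
  shows "\<bar>ball_mass n u t / t ^ (n - 1)\<bar> \<le> B * t"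
proof (cases "t = 0")
  case False
  have "norm (ball_mass n u t) \<le> (t ^ (n - 1) * B) * (t - 0)"
    unfolding ball_mass_def
  proof (rule integral_bound)
    fix s assume s: "s \<in> {0..t}"
    have "\<bar>s ^ (n - 1)\<bar> \<le> t ^ (n - 1)" using s by (auto intro: power_mono)
    then show "norm (s ^ (n - 1) * u s) \<le> t ^ (n - 1) * B"
      using assms(3)[OF s] by (simp add: abs_mult mult_mono')
  qed (use assms in \<open>auto intro!: continuous_intros\<close>)
  then show ?thesis
    using False assms(1) by (simp add: abs_div pos_divide_le_eq mult_ac)
qed simp

lemma has_real_derivative_ball_mass:
  assumes "continuous_on {0..e} u" "t \<in> {0..e}"
  shows "(ball_mass n u has_real_derivative t ^ (n - 1) * u t) (at t within {0..e})"
  unfolding ball_mass_def[abs_def]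
  by (rule integral_has_real_derivative[OF _ assms(2)]) (intro continuous_intros assms(1))

lemma continuous_on_ball_mass_div:
  assumes cont: "continuous_on {0..e} u"
  shows "continuous_on {0..e} (\<lambda>t. ball_mass n u t / t ^ (n - 1))"
  unfolding continuous_on_eq_continuous_within
proof
  fix t assume t: "t \<in> {0..e}"
  have "continuous (at t within {0..e}) (ball_mass n u)"
    using has_real_derivative_ball_mass[OF cont t]
    by (rule DERIV_continuous)
  show "continuous (at t within {0..e}) (\<lambda>t. ball_mass n u t / t ^ (n - 1))"
  proof (cases "t = 0")
    case False
    with \<open>continuous (at t within {0..e}) (ball_mass n u)\<close> show ?thesis
      by (intro continuous_intros) auto
  next
    case True
    obtain B where B: "\<And>s. s \<in> {0..e} \<Longrightarrow> \<bar>u s\<bar> \<le> B"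
      using compact_imp_bounded[OF compact_continuous_image[OF cont compact_Icc]]
      by (force simp: bounded_iff)
    have "((\<lambda>t. ball_mass n u t / t ^ (n - 1)) \<longlongrightarrow> 0) (at 0 within {0..e})"
    proof (rule Lim_null_comparison)
      show "\<forall>\<^sub>F t in at 0 within {0..e}. norm (ball_mass n u t / t ^ (n - 1)) \<le> B * t"
        unfolding eventually_at_filter real_norm_def
      proof (intro always_eventually allI impI)
        fix t assume "t \<in> {0..e}"
        then show "\<bar>ball_mass n u t / t ^ (n - 1)\<bar> \<le> B * t"
          by (intro abs_ball_mass_div_le continuous_on_subset[OF cont] B) auto
      qed
      show "((\<lambda>t. B * t) \<longlongrightarrow> 0) (at 0 within {0..e})"
        by (auto intro!: tendsto_eq_intros)
    qed
    then show ?thesis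
      unfolding continuous_within True by simp
  qed
qed

lemma flux_diff:
  assumes "continuous_on {0..t} u" "continuous_on {0..t} v"
  shows "flux n beta gam u t - flux n beta gam v t = flux n beta gam (\<lambda>s. u s - v s) t"
  by (simp add: flux_def ball_mass_diff[OF assms, symmetric] diff_divide_distrib algebra_simps)

lemma abs_flux_le:
  assumes "0 \<le> t" "continuous_on {0..t} u" "\<And>s. s \<in> {0..t} \<Longrightarrow> \<bar>u s\<bar> \<le> B"
  shows "\<bar>flux n beta gam u t\<bar> \<le> (\<bar>beta\<bar> + \<bar>gam\<bar>) * B * t"
proof -
  have "\<bar>flux n beta gam u t\<bar> \<le> \<bar>- beta * t * u t\<bar> + \<bar>gam * (ball_mass n u t / t ^ (n - 1))\<bar>"
    unfolding flux_def by (rule abs_triangle_ineq4)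
  also have "\<dots> = \<bar>beta\<bar> * t * \<bar>u t\<bar> + \<bar>gam\<bar> * \<bar>ball_mass n u t / t ^ (n - 1)\<bar>"
    by (simp only: abs_mult abs_minus_cancel abs_of_nonneg[OF assms(1)])
  also have "\<dots> \<le> \<bar>beta\<bar> * t * B + \<bar>gam\<bar> * (B * t)"
    using assms abs_ball_mass_div_le[OF assms] by (intro add_mono mult_left_mono) auto
  finally show ?thesis by (simp add: algebra_simps)
qed

lemma continuous_on_flux:
  "continuous_on {0..e} u \<Longrightarrow> continuous_on {0..e} (flux n beta gam u)"
  unfolding flux_def[abs_def] by (intro continuous_intros continuous_on_ball_mass_div)

lemma abs_slope_le:
  assumes "0 \<le> t" "continuous_on {0..t} u" "\<And>s. s \<in> {0..t} \<Longrightarrow> u s \<in> {a..b}"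
    and "0 < a" "m \<le> 1"
  shows "\<bar>slope n m beta gam u t\<bar> \<le> b powr (1 - m) * (\<bar>beta\<bar> + \<bar>gam\<bar>) * b * t"
proof -
  have "\<bar>flux n beta gam u t\<bar> \<le> (\<bar>beta\<bar> + \<bar>gam\<bar>) * b * t"
    using assms by (intro abs_flux_le) force+
  moreover have "u t powr (1 - m) \<le> b powr (1 - m)"
    using assms(3)[of t] assms(1,4,5) by (intro powr_mono2) auto
  ultimately show ?thesis
    unfolding slope_def abs_mult by (simp add: mult_mono' mult.assoc)
qed

lemma abs_slope_diff_le:
  assumes "0 \<le> t" "continuous_on {0..t} u" "continuous_on {0..t} v"
    and "\<And>s. s \<in> {0..t} \<Longrightarrow> u s \<in> {a..b}" "\<And>s. s \<in> {0..t} \<Longrightarrow> v s \<in> {a..b}"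
    and "\<And>s. s \<in> {0..t} \<Longrightarrow> \<bar>u s - v s\<bar> \<le> D"
    and "0 < a" "0 \<le> m" "m \<le> 1"
  shows "\<bar>slope n m beta gam u t - slope n m beta gam v t\<bar>
           \<le> (a powr (- m) * b + b powr (1 - m)) * (\<bar>beta\<bar> + \<bar>gam\<bar>) * t * D"
proof -
  let ?c = "\<bar>beta\<bar> + \<bar>gam\<bar>"
  have ut: "u t \<in> {a..b}" and vt: "v t \<in> {a..b}" and D: "\<bar>u t - v t\<bar> \<le> D"
    using assms(1,4-6) by auto
  have "slope n m beta gam u t - slope n m beta gam v t
      = (u t powr (1 - m) - v t powr (1 - m)) * flux n beta gam u t
        + v t powr (1 - m) * flux n beta gam (\<lambda>s. u s - v s) t"
    unfolding slope_def flux_diff[OF assms(2,3), symmetric] by (simp add: algebra_simps)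
  also have "\<bar>\<dots>\<bar> \<le> (a powr (- m) * D) * (?c * b * t) + b powr (1 - m) * (?c * D * t)"
  proof (rule order_trans[OF abs_triangle_ineq], unfold abs_mult, rule add_mono)
    have "\<bar>u t powr (1 - m) - v t powr (1 - m)\<bar> \<le> a powr (- m) * \<bar>u t - v t\<bar>"
      using abs_powr_diff_le[of "1 - m" a "u t" "v t"] ut vt assms(7-9) by simp
    also have "\<dots> \<le> a powr (- m) * D" using D by (simp add: mult_left_mono)
    finally show "\<bar>u t powr (1 - m) - v t powr (1 - m)\<bar> * \<bar>flux n beta gam u t\<bar>
        \<le> a powr (- m) * D * (?c * b * t)"
      using abs_flux_le[of t u b n beta gam] assms(1,2,4,7)
      by (intro mult_mono) force+
    have "\<bar>flux n beta gam (\<lambda>s. u s - v s) t\<bar> \<le> ?c * D * t"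
      using assms(1-3,6) by (intro abs_flux_le continuous_intros) auto
    moreover have "v t powr (1 - m) \<le> b powr (1 - m)"
      using vt assms(7,9) by (intro powr_mono2) auto
    ultimately show "\<bar>v t powr (1 - m)\<bar> * \<bar>flux n beta gam (\<lambda>s. u s - v s) t\<bar>
        \<le> b powr (1 - m) * (?c * D * t)"
      by (simp add: mult_mono')
  qed
  finally show ?thesis by (simp add: algebra_simps)
qed

lemma continuous_on_slope:
  assumes "continuous_on {0..e} u" "\<And>s. s \<in> {0..e} \<Longrightarrow> 0 < u s"
  shows "continuous_on {0..e} (slope n m beta gam u)"
  unfolding slope_def[abs_def]
  using assms by (intro continuous_intros continuous_on_flux) force+

lemma has_real_derivative_flux:
  assumes "continuous_on {0..e} u" "r \<in> {0<..<e}" "(u has_real_derivative u') (at r)"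
  shows "(flux n beta gam u has_real_derivative
            - beta * u r - beta * r * u' - gam * (u r - real (n - 1) * ball_mass n u r / r ^ n)) (at r)"
proof -
  have "at r within {0..e} = at r"
    using assms(2) by (intro at_within_interior) auto
  then have mass: "(ball_mass n u has_real_derivative r ^ (n - 1) * u r) (at r)"
    using has_real_derivative_ball_mass[OF assms(1), of r n] assms(2) by simp
  have "r > 0" using assms(2) by simp
  have "((\<lambda>t. ball_mass n u t / t ^ (n - 1)) has_real_derivative
      (r ^ (n - 1) * u r * r ^ (n - 1) - ball_mass n u r * (real (n - 1) * r ^ (n - 1 - Suc 0)))
        / (r ^ (n - 1) * r ^ (n - 1))) (at r)"
    using \<open>r > 0\<close> by (intro DERIV_divide[OF mass DERIV_pow]) simp
  moreover have "(r ^ (n - 1) * u r * r ^ (n - 1) - ball_mass n u r * (real (n - 1) * r ^ (n - 1 - Suc 0)))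
        / (r ^ (n - 1) * r ^ (n - 1)) = u r - real (n - 1) * ball_mass n u r / r ^ n"
    using \<open>r > 0\<close> by (cases n; cases "n - 1") (auto simp: field_simps)
  ultimately have average: "((\<lambda>t. ball_mass n u t / t ^ (n - 1)) has_real_derivative
      u r - real (n - 1) * ball_mass n u r / r ^ n) (at r)"
    by simp
  have "((\<lambda>t. - beta * t * u t) has_real_derivative - beta * u r - beta * r * u') (at r)"
    using DERIV_mult[OF DERIV_cmult[OF DERIV_ident, of "- beta"] assms(3)] by (simp add: algebra_simps)
  from DERIV_diff[OF this DERIV_cmult[OF average, of gam]] show ?thesis
    unfolding flux_def[abs_def] .
qed

lemma slope_eq_if_first_integral:
  assumes "0 < r" "0 < f r"
    and "r ^ (n - 1) * (f r powr (m - 1) * f') + beta * r ^ n * f r = - gam * ball_mass n f r"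
    and "1 \<le> n"
  shows "f' = slope n m beta gam f r"
proof -
  have "r ^ n = r * r ^ (n - 1)" using assms(4) by (cases n) auto
  then have "f r powr (m - 1) * f' = - beta * r * f r - gam * (ball_mass n f r / r ^ (n - 1))"
    using assms(1,3) by (simp add: field_simps)
  then have "f r powr (1 - m) * (f r powr (m - 1) * f') = slope n m beta gam f r"
    by (simp add: slope_def flux_def)
  moreover have "f r powr (1 - m) * f r powr (m - 1) = 1"
    using assms(2) by (simp add: powr_add[symmetric])
  ultimately show ?thesis by (metis mult.assoc mult_1)
qed

lemma slope_continuously_differentiable:
  assumes cont: "continuous_on {0..e} u" and pos: "\<And>s. s \<in> {0..e} \<Longrightarrow> 0 < u s"
    and deriv: "\<And>r. r \<in> {0<..<e} \<Longrightarrow> (u has_real_derivative slope n m beta gam u r) (at r)"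
  shows "\<exists>D. (\<forall>r\<in>{0<..<e}. (slope n m beta gam u has_real_derivative D r) (at r))
              \<and> continuous_on {0<..<e} D"
proof -
  let ?u' = "slope n m beta gam u"
  define flux' where "flux' r = - beta * u r - beta * r * ?u' r
    - gam * (u r - real (n - 1) * ball_mass n u r / r ^ n)" for r
  define D where "D r = (1 - m) * u r powr (- m) * ?u' r * flux n beta gam u r
    + u r powr (1 - m) * flux' r" for r
  have "(?u' has_real_derivative D r) (at r)" if r: "r \<in> {0<..<e}" for r
  proof -
    have "0 < u r" using pos r by auto
    from DERIV_mult[OF DERIV_fun_powr[OF deriv[OF r] this, of "1 - m"]
        has_real_derivative_flux[OF cont r deriv[OF r], of n beta gam]]
    show ?thesis unfolding slope_def[abs_def] D_def flux'_def by (simp add: algebra_simps)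
  qed
  moreover have "continuous_on {0<..<e} D"
  proof -
    have sub: "{0<..<e} \<subseteq> {0..e}" by auto
    have "continuous_on {0..e} (ball_mass n u)"
      using has_real_derivative_ball_mass[OF cont] by (intro DERIV_continuous_on) blast
    moreover have "continuous_on {0..e} ?u'"
      using cont pos by (rule continuous_on_slope)
    ultimately show ?thesis
      unfolding D_def flux'_def
      using cont pos continuous_on_flux[OF cont]
      by (intro continuous_intros continuous_on_subset[OF _ sub]) (auto simp: less_imp_neq[symmetric])
  qed
  ultimately show ?thesis by blast
qed

section \<open>Local existence and uniqueness\<close>

locale radial_problem =
  fixes n :: nat and m alpha beta eta :: real
  assumes dim: "2 \<le> n" and exponent: "0 < m" "m < 1" and initial: "0 < eta"
begin

(*
  Solutions are controlled in the band [eta/2, 3 eta/2] around the initial value: slope_bound and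
  slope_lipschitz are the constants of abs_slope_le and abs_slope_diff_le for this band at t = 1.
*)
abbreviation gam :: real where
  "gam \<equiv> alpha - real n * beta"

definition slope_bound :: real where
  "slope_bound = (3 * eta / 2) powr (1 - m) * (\<bar>beta\<bar> + \<bar>gam\<bar>) * (3 * eta / 2)"

definition slope_lipschitz :: real where
  "slope_lipschitz = ((eta / 2) powr (- m) * (3 * eta / 2) + (3 * eta / 2) powr (1 - m)) * (\<bar>beta\<bar> + \<bar>gam\<bar>)"

definition small_radius :: "real \<Rightarrow> bool" where
  "small_radius e \<longleftrightarrow> 0 < e \<and> e \<le> 1 \<and> e * slope_bound < eta / 2 \<and> e * slope_lipschitz < 1"

lemma slope_bound_nonneg: "0 \<le> slope_bound"
  using initial by (simp add: slope_bound_def)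

lemma slope_lipschitz_nonneg: "0 \<le> slope_lipschitz"
  using initial by (simp add: slope_lipschitz_def)

lemma small_radius_exists: "\<exists>e. small_radius e"
proof -
  note M = slope_bound_nonneg and K = slope_lipschitz_nonneg
  define e where "e = min 1 (min (eta / (2 * (slope_bound + 1))) (1 / (slope_lipschitz + 1)))"
  have "0 < e" using M K initial by (simp add: e_def)
  have "e * slope_bound \<le> eta / (2 * (slope_bound + 1)) * slope_bound"
    using M by (intro mult_right_mono) (auto simp: e_def)
  also have "\<dots> < eta / 2"
    using M initial by (simp add: field_simps)
  finally have "e * slope_bound < eta / 2" .
  have "e * slope_lipschitz \<le> 1 / (slope_lipschitz + 1) * slope_lipschitz"
    using K by (intro mult_right_mono) (auto simp: e_def)
  also have "\<dots> < 1"
    using K by (simp add: field_simps)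
  finally have "e * slope_lipschitz < 1" .
  moreover have "e \<le> 1" by (simp add: e_def)
  ultimately show ?thesis
    using \<open>0 < e\<close> \<open>e * slope_bound < eta / 2\<close> unfolding small_radius_def by blast
qed

lemma abs_slope_le_slope_bound:
  assumes "t \<in> {0..1}" "continuous_on {0..t} u" "\<And>s. s \<in> {0..t} \<Longrightarrow> u s \<in> {eta/2..3*eta/2}"
  shows "\<bar>slope n m beta gam u t\<bar> \<le> slope_bound"
proof -
  have "\<bar>slope n m beta gam u t\<bar> \<le> slope_bound * t"
    using abs_slope_le[OF _ assms(2,3)] assms(1) initial exponent
    by (simp add: slope_bound_def mult_ac)
  also have "\<dots> \<le> slope_bound"
    using assms(1) slope_bound_nonneg by (intro mult_left_le) auto
  finally show ?thesis .
qed

lemma abs_slope_diff_le_slope_lipschitz: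
  assumes "t \<in> {0..1}" "continuous_on {0..t} u" "continuous_on {0..t} v"
    and "\<And>s. s \<in> {0..t} \<Longrightarrow> u s \<in> {eta/2..3*eta/2}" "\<And>s. s \<in> {0..t} \<Longrightarrow> v s \<in> {eta/2..3*eta/2}"
    and "\<And>s. s \<in> {0..t} \<Longrightarrow> \<bar>u s - v s\<bar> \<le> D"
  shows "\<bar>slope n m beta gam u t - slope n m beta gam v t\<bar> \<le> slope_lipschitz * D"
proof -
  have "0 \<le> D" using assms(6)[of 0] assms(1) by force
  have "\<bar>slope n m beta gam u t - slope n m beta gam v t\<bar> \<le> slope_lipschitz * t * D"
    using abs_slope_diff_le[OF _ assms(2-6)] assms(1) initial exponent
    by (simp add: slope_lipschitz_def mult_ac)
  also have "\<dots> \<le> slope_lipschitz * D"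
    using assms(1) slope_lipschitz_nonneg \<open>0 \<le> D\<close>
    by (intro mult_right_mono mult_left_le) auto
  finally show ?thesis .
qed

lemma radial_sol_continuous: "radial_sol n m alpha beta eta e f \<Longrightarrow> continuous_on {0..<e} f"
  unfolding radial_sol_def by (metis DERIV_continuous_on)

lemma radial_sol_initial: "radial_sol n m alpha beta eta e f \<Longrightarrow> f 0 = eta"
  unfolding radial_sol_def by blast

lemma radial_sol_divergence_form:
  assumes sol: "radial_sol n m alpha beta eta e f" and s: "s \<in> {0<..<e}"
  shows "((\<lambda>s. s ^ (n - 1) * deriv (\<lambda>s. f s powr m / m) s + beta * s ^ n * f s)
           has_real_derivative - gam * (s ^ (n - 1) * f s)) (at s)"
proof -
  obtain f' f'' where pos: "\<forall>r\<in>{0..<e}. 0 < f r"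
    and f': "\<forall>r\<in>{0..<e}. (f has_real_derivative f' r) (at r within {0..<e})"
    and f'': "\<forall>r\<in>{0<..<e}. (f' has_real_derivative f'' r) (at r)"
    and ode: "\<forall>r\<in>{0<..<e}. deriv (deriv (\<lambda>s. f s powr m / m)) r
      + (real n - 1) / r * deriv (\<lambda>s. f s powr m / m) r + alpha * f r + beta * r * f' r = 0"
    using sol unfolding radial_sol_def by blast
  have f'_at: "(f has_real_derivative f' r) (at r)" if "r \<in> {0<..<e}" for r
    using f' that by (intro has_real_derivative_at_if_within_Ico) auto
  define g where "g = (\<lambda>r. f r powr (m - 1) * f' r)"
  have "((\<lambda>s. f s powr m / m) has_real_derivative g r) (at r)" if "r \<in> {0<..<e}" for r
    unfolding g_def using pos that exponent by (intro has_real_derivative_powr_div f'_at) auto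
  then have deriv_pressure: "deriv (\<lambda>s. f s powr m / m) r = g r" if "r \<in> {0<..<e}" for r
    using that by (simp add: DERIV_imp_deriv)
  have "0 < f s" using pos s by simp
  from DERIV_mult[OF DERIV_fun_powr[OF f'_at[OF s] this, of "m - 1"] f''[rule_format, OF s]]
  obtain g' where "(g has_real_derivative g') (at s)"
    unfolding g_def by blast
  then have deriv_q: "(deriv (\<lambda>s. f s powr m / m) has_real_derivative g') (at s)"
    by (rule has_field_derivative_transform_within_open[where S = "{0<..<e}"])
       (use s deriv_pressure in auto)
  then have "deriv (deriv (\<lambda>s. f s powr m / m)) s = g'"
    by (rule DERIV_imp_deriv)
  with ode[rule_format, OF s] have "g' + (real n - 1) / s * deriv (\<lambda>s. f s powr m / m) s
      + alpha * f s + beta * s * f' s = 0"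
    by simp
  with radial_equation_iff_divergence_form[OF _ _ deriv_q f'_at[OF s]] s dim show ?thesis
    by simp
qed

lemma radial_sol_first_integral:
  assumes sol: "radial_sol n m alpha beta eta e f" and r: "r \<in> {0<..<e}"
  obtains f' where "(f has_real_derivative f' r) (at r within {0..<e})"
    and "r ^ (n - 1) * (f r powr (m - 1) * f' r) + beta * r ^ n * f r = - gam * ball_mass n f r"
proof -
  obtain f' where pos: "\<forall>r\<in>{0..<e}. 0 < f r"
    and f': "\<forall>r\<in>{0..<e}. (f has_real_derivative f' r) (at r within {0..<e})"
    and cont_f': "continuous_on {0..<e} f'"
    using sol unfolding radial_sol_def by blast
  define H where "H s = s ^ (n - 1) * (f s powr (m - 1) * f' s) + beta * s ^ n * f s" for s
  have "{0..r} \<subseteq> {0..<e}" using r by auto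
  have cont_f: "continuous_on {0..r} f"
    by (rule continuous_on_subset[OF radial_sol_continuous[OF sol] \<open>{0..r} \<subseteq> {0..<e}\<close>])
  have "f s \<noteq> 0" if "s \<in> {0..r}" for s
    using pos \<open>{0..r} \<subseteq> {0..<e}\<close> that by (metis less_irrefl subsetD)
  moreover have "continuous_on {0..r} f'"
    by (rule continuous_on_subset[OF cont_f' \<open>{0..r} \<subseteq> {0..<e}\<close>])
  ultimately have "continuous_on {0..r} H"
    unfolding H_def by (intro continuous_intros cont_f) auto
  moreover have "(H has_real_derivative - gam * (s ^ (n - 1) * f s)) (at s)" if "s \<in> {0<..<r}" for s
  proof -
    have "deriv (\<lambda>s. f s powr m / m) x = f x powr (m - 1) * f' x" if "x \<in> {0<..<e}" for x
      using f' pos that exponent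
      by (intro DERIV_imp_deriv has_real_derivative_powr_div has_real_derivative_at_if_within_Ico) auto
    moreover have "s \<in> {0<..<e}" using that r by auto
    ultimately show ?thesis
      unfolding H_def
      by (intro has_field_derivative_transform_within_open[where S = "{0<..<e}",
            OF radial_sol_divergence_form[OF sol]]) auto
  qed
  ultimately have "((\<lambda>s. - gam * (s ^ (n - 1) * f s)) has_integral H r - H 0) {0..r}"
    using r by (intro fundamental_theorem_of_calculus_interior)
       (simp_all add: has_real_derivative_iff_has_vector_derivative[symmetric])
  moreover have "H 0 = 0" using dim by (simp add: H_def power_0_left)
  ultimately have "((\<lambda>s. - gam * (s ^ (n - 1) * f s)) has_integral H r) {0..r}"
    by simp
  then have "H r = integral {0..r} (\<lambda>s. - gam * (s ^ (n - 1) * f s))"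
    by (rule integral_unique[symmetric])
  also have "\<dots> = - gam * ball_mass n f r"
    unfolding ball_mass_def by (rule integral_mult_right)
  finally have "H r = - gam * ball_mass n f r" .
  then show ?thesis
    by (intro that[of f']) (use f' r in \<open>auto simp: H_def\<close>)
qed

lemma radial_sol_has_derivative_slope:
  assumes sol: "radial_sol n m alpha beta eta e f" and r: "r \<in> {0..<e}"
  shows "(f has_real_derivative slope n m beta gam f r) (at r within {0..<e})"
proof (cases "r = 0")
  case True
  obtain f' where f': "\<forall>r\<in>{0..<e}. (f has_real_derivative f' r) (at r within {0..<e})"
    and "f' 0 = 0"
    using sol unfolding radial_sol_def by blast
  with r True show ?thesis by (metis slope_0)
next
  case False
  then have "r \<in> {0<..<e}" using r by auto
  from radial_sol_first_integral[OF sol this] obtain f' where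
    f': "(f has_real_derivative f' r) (at r within {0..<e})" and
    "r ^ (n - 1) * (f r powr (m - 1) * f' r) + beta * r ^ n * f r = - gam * ball_mass n f r" .
  moreover have "0 < f r" using sol r unfolding radial_sol_def by auto
  ultimately have "f' r = slope n m beta gam f r"
    using \<open>r \<in> {0<..<e}\<close> dim by (intro slope_eq_if_first_integral) auto
  with f' show ?thesis by simp
qed

lemma radial_sol_near_initial:
  assumes sol: "radial_sol n m alpha beta eta e f" and "small_radius e" and r: "r \<in> {0..<e}"
  shows "\<bar>f r - eta\<bar> < eta / 2"
proof -
  note cont = radial_sol_continuous[OF sol]
  have "\<bar>f r - f 0\<bar> < eta / 2"
  proof (rule abs_diff_initial_less_if_derivative_bounded[OF cont])
    fix s assume s: "s \<in> {0<..<e}"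
    show "(f has_real_derivative slope n m beta gam f s) (at s)"
      using s by (intro has_real_derivative_at_if_within_Ico[OF radial_sol_has_derivative_slope[OF sol]]) auto
    assume near: "\<forall>x\<in>{0..s}. \<bar>f x - f 0\<bar> < eta / 2"
    show "\<bar>slope n m beta gam f s\<bar> \<le> slope_bound"
    proof (rule abs_slope_le_slope_bound)
      show "s \<in> {0..1}" using s \<open>small_radius e\<close> by (auto simp: small_radius_def)
      show "continuous_on {0..s} f" using s by (intro continuous_on_subset[OF cont]) auto
      show "f x \<in> {eta/2..3*eta/2}" if "x \<in> {0..s}" for x
        using near[rule_format, OF that, unfolded radial_sol_initial[OF sol] abs_less_iff] by auto
    qed
  qed (use \<open>small_radius e\<close> initial r in \<open>auto simp: small_radius_def\<close>)
  then show ?thesis using radial_sol_initial[OF sol] by simp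
qed

lemma radial_sol_unique:
  assumes f: "radial_sol n m alpha beta eta e f" and g: "radial_sol n m alpha beta eta e g"
    and "small_radius e" and T: "T \<in> {0..<e}"
  shows "f T = g T"
proof -
  have band: "f s \<in> {eta/2..3*eta/2}" "g s \<in> {eta/2..3*eta/2}" if "s \<in> {0..<e}" for s
    using radial_sol_near_initial[OF f \<open>small_radius e\<close> that, unfolded abs_less_iff]
      radial_sol_near_initial[OF g \<open>small_radius e\<close> that, unfolded abs_less_iff] by auto
  have "(\<lambda>s. f s - g s) T = 0"
  proof (rule eq_0_if_derivative_dominated[where e = e and h = "\<lambda>s. f s - g s" and L = slope_lipschitz
      and D = "\<lambda>r. slope n m beta gam f r - slope n m beta gam g r"])
    show "continuous_on {0..<e} (\<lambda>s. f s - g s)"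
      by (intro continuous_intros radial_sol_continuous f g)
    show "(\<lambda>s. f s - g s) 0 = 0" using radial_sol_initial[OF f] radial_sol_initial[OF g] by simp
  next
    fix r assume "r \<in> {0<..<e}"
    then show "((\<lambda>s. f s - g s) has_real_derivative slope n m beta gam f r - slope n m beta gam g r) (at r)"
      by (intro DERIV_diff has_real_derivative_at_if_within_Ico[OF radial_sol_has_derivative_slope[OF f]]
          has_real_derivative_at_if_within_Ico[OF radial_sol_has_derivative_slope[OF g]]) auto
  next
    fix r B assume "r \<in> {0<..<e}" "\<forall>s\<in>{0..r}. \<bar>f s - g s\<bar> \<le> B"
    then show "\<bar>slope n m beta gam f r - slope n m beta gam g r\<bar> \<le> slope_lipschitz * B"
      using band \<open>small_radius e\<close> unfolding small_radius_def
      by (intro abs_slope_diff_le_slope_lipschitz continuous_on_subset[OF radial_sol_continuous[OF f]]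
            continuous_on_subset[OF radial_sol_continuous[OF g]]) auto
  qed (use \<open>small_radius e\<close> T in \<open>auto simp: small_radius_def\<close>)
  then show ?thesis by simp
qed

lemma radial_equation_if_slope:
  assumes cont: "continuous_on {0..e} f" and pos: "\<And>s. s \<in> {0..e} \<Longrightarrow> 0 < f s"
    and deriv: "\<And>s. s \<in> {0<..<e} \<Longrightarrow> (f has_real_derivative slope n m beta gam f s) (at s)"
    and r: "r \<in> {0<..<e}"
  shows "deriv (deriv (\<lambda>s. f s powr m / m)) r + (real n - 1) / r * deriv (\<lambda>s. f s powr m / m) r
           + alpha * f r + beta * r * slope n m beta gam f r = 0"
proof -
  have deriv_pressure: "deriv (\<lambda>s. f s powr m / m) s = flux n beta gam f s" if s: "s \<in> {0<..<e}" for s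
  proof (rule DERIV_imp_deriv)
    have "0 < f s" using pos s by auto
    have "m \<noteq> 0" using exponent by simp
    have "f s powr (m - 1) * slope n m beta gam f s = flux n beta gam f s"
      using \<open>0 < f s\<close> by (simp add: slope_def powr_add[symmetric] mult.assoc[symmetric])
    then show "((\<lambda>s. f s powr m / m) has_real_derivative flux n beta gam f s) (at s)"
      using has_real_derivative_powr_div[OF \<open>0 < f s\<close> \<open>m \<noteq> 0\<close> deriv[OF s]] by simp
  qed
  obtain q' where "(flux n beta gam f has_real_derivative q') (at r)"
    using has_real_derivative_flux[OF cont r deriv[OF r]] by blast
  then have deriv_q: "(deriv (\<lambda>s. f s powr m / m) has_real_derivative q') (at r)"
    by (rule has_field_derivative_transform_within_open[where S = "{0<..<e}"])
       (use r deriv_pressure in auto)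
  moreover have "((\<lambda>s. s ^ (n - 1) * deriv (\<lambda>s. f s powr m / m) s + beta * s ^ n * f s)
      has_real_derivative - gam * (r ^ (n - 1) * f r)) (at r)"
  proof (rule has_field_derivative_transform_within_open[where S = "{0<..<e}"])
    have "at r within {0..e} = at r" using r by (intro at_within_interior) auto
    then show "((\<lambda>s. - gam * ball_mass n f s) has_real_derivative - gam * (r ^ (n - 1) * f r)) (at r)"
      using has_real_derivative_ball_mass[OF cont, of r n] r by (intro DERIV_cmult) auto
    fix s assume s: "s \<in> {0<..<e}"
    have "s ^ n = s * s ^ (n - 1)" using dim by (cases n) auto
    then show "- gam * ball_mass n f s
        = s ^ (n - 1) * deriv (\<lambda>s. f s powr m / m) s + beta * s ^ n * f s"
      using s deriv_pressure[OF s] by (simp add: flux_def field_simps)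
  qed (use r in auto)
  ultimately show ?thesis
    using radial_equation_iff_divergence_form[OF _ _ deriv_q deriv[OF r]] DERIV_imp_deriv[OF deriv_q] r dim
    by simp
qed

lemma radial_sol_if_integral_equation:
  assumes "0 < e" and cont: "continuous_on {0..e} f" and pos: "\<And>s. s \<in> {0..e} \<Longrightarrow> 0 < f s"
    and integral_eq: "\<And>x. x \<in> {0..e} \<Longrightarrow> f x = eta + integral {0..x} (slope n m beta gam f)"
  shows "radial_sol n m alpha beta eta e f"
proof -
  let ?f' = "slope n m beta gam f"
  have cont_f': "continuous_on {0..e} ?f'"
    using cont pos by (rule continuous_on_slope)
  have deriv_within: "(f has_real_derivative ?f' r) (at r within {0..<e})" if r: "r \<in> {0..<e}" for r
  proof -
    have "((\<lambda>x. eta + integral {0..x} ?f') has_real_derivative 0 + ?f' r) (at r within {0..e})"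
      using r by (intro DERIV_add DERIV_const integral_has_real_derivative cont_f') auto
    then have "(f has_real_derivative ?f' r) (at r within {0..e})"
      unfolding add_0_left by (rule has_field_derivative_transform_within[where d = 1]) (use r integral_eq in auto)
    then show ?thesis by (rule DERIV_subset) auto
  qed
  then have deriv: "(f has_real_derivative ?f' r) (at r)" if "r \<in> {0<..<e}" for r
    using that by (intro has_real_derivative_at_if_within_Ico) auto
  obtain f'' where "\<forall>r\<in>{0<..<e}. (?f' has_real_derivative f'' r) (at r)"
      and "continuous_on {0<..<e} f''"
    using slope_continuously_differentiable[OF cont pos deriv] by blast
  moreover have "f 0 = eta" using integral_eq[of 0] \<open>0 < e\<close> by simp
  moreover have "continuous_on {0..<e} ?f'" by (rule continuous_on_subset[OF cont_f']) auto
  ultimately show ?thesis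
    unfolding radial_sol_def using pos deriv_within radial_equation_if_slope[OF cont pos deriv]
    by (intro conjI exI[of _ ?f'] exI[of _ f'']) auto
qed

(*
  Clamping x to [0, e] makes picard e u a bounded continuous function on the whole real line, so
  the fixed point can be sought in the complete space real =>_C real.
*)
definition picard :: "real \<Rightarrow> (real \<Rightarrow> real) \<Rightarrow> real \<Rightarrow> real" where
  "picard e u x = eta + integral {0..max 0 (min e x)} (slope n m beta gam u)"

lemma continuous_on_picard:
  assumes "0 \<le> e" "continuous_on {0..e} u" "\<And>s. s \<in> {0..e} \<Longrightarrow> 0 < u s"
  shows "continuous_on UNIV (picard e u)"
proof -
  have "continuous_on {0..e} (\<lambda>y. integral {0..y} (slope n m beta gam u))"
    using integral_has_real_derivative[OF continuous_on_slope[OF assms(2,3)]]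
    by (intro DERIV_continuous_on) blast
  then have "continuous_on UNIV (\<lambda>x. integral {0..max 0 (min e x)} (slope n m beta gam u))"
    by (rule continuous_on_compose2) (use assms(1) in \<open>auto intro!: continuous_intros\<close>)
  then show ?thesis
    unfolding picard_def[abs_def] by (intro continuous_intros)
qed

lemma abs_picard_minus_initial_le:
  assumes e: "small_radius e" and u: "continuous_on {0..e} u" "\<And>s. s \<in> {0..e} \<Longrightarrow> u s \<in> {eta/2..3*eta/2}"
  shows "\<bar>picard e u x - eta\<bar> \<le> e * slope_bound"
proof -
  let ?c = "max 0 (min e x)"
  have c: "?c \<in> {0..e}" "e \<le> 1" using e by (auto simp: small_radius_def)
  have "norm (integral {0..?c} (slope n m beta gam u)) \<le> slope_bound * (?c - 0)"
  proof (rule integral_bound)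
    show "continuous_on {0..?c} (slope n m beta gam u)"
      using c u initial by (intro continuous_on_subset[OF continuous_on_slope[OF u(1)]]) force+
    fix t assume "t \<in> {0..?c}"
    then show "norm (slope n m beta gam u t) \<le> slope_bound"
      using c u by (auto intro!: abs_slope_le_slope_bound continuous_on_subset[OF u(1)])
  qed simp
  also have "\<dots> \<le> slope_bound * e"
    using c slope_bound_nonneg by (intro mult_left_mono) auto
  finally show ?thesis by (simp add: picard_def mult.commute)
qed

lemma abs_picard_diff_le:
  assumes e: "small_radius e"
    and u: "continuous_on {0..e} u" "\<And>s. s \<in> {0..e} \<Longrightarrow> u s \<in> {eta/2..3*eta/2}"
    and v: "continuous_on {0..e} v" "\<And>s. s \<in> {0..e} \<Longrightarrow> v s \<in> {eta/2..3*eta/2}"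
    and D: "\<And>s. s \<in> {0..e} \<Longrightarrow> \<bar>u s - v s\<bar> \<le> D"
  shows "\<bar>picard e u x - picard e v x\<bar> \<le> e * slope_lipschitz * D"
proof -
  let ?c = "max 0 (min e x)"
  have c: "?c \<in> {0..e}" "e \<le> 1" using e by (auto simp: small_radius_def)
  have "0 \<le> D" using D[of 0] c by force
  have cont: "continuous_on {0..?c} (slope n m beta gam w)" if "continuous_on {0..e} w"
    "\<And>s. s \<in> {0..e} \<Longrightarrow> w s \<in> {eta/2..3*eta/2}" for w
    using c that initial by (intro continuous_on_subset[OF continuous_on_slope[OF that(1)]]) force+
  have "norm (integral {0..?c} (\<lambda>t. slope n m beta gam u t - slope n m beta gam v t))
      \<le> (slope_lipschitz * D) * (?c - 0)"
  proof (rule integral_bound)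
    show "continuous_on {0..?c} (\<lambda>t. slope n m beta gam u t - slope n m beta gam v t)"
      using cont u v by (intro continuous_intros) auto
    fix t assume "t \<in> {0..?c}"
    then show "norm (slope n m beta gam u t - slope n m beta gam v t) \<le> slope_lipschitz * D"
      using c u v D
      by (auto intro!: abs_slope_diff_le_slope_lipschitz continuous_on_subset[OF u(1)] continuous_on_subset[OF v(1)])
  qed simp
  also have "\<dots> \<le> (slope_lipschitz * D) * e"
    using c slope_lipschitz_nonneg \<open>0 \<le> D\<close> by (intro mult_left_mono) auto
  finally show ?thesis
    using cont[OF u] cont[OF v]
    by (simp add: picard_def integral_diff integrable_continuous_interval mult_ac)
qed

lemma picard_in_band:
  assumes e: "small_radius e"
    and u: "continuous_on {0..e} u" "\<And>s. s \<in> {0..e} \<Longrightarrow> u s \<in> {eta/2..3*eta/2}"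
  shows "picard e u \<in> bcontfun" "picard e u x \<in> {eta/2..3*eta/2}"
proof -
  have near: "\<bar>picard e u x - eta\<bar> \<le> eta / 2" for x
  proof -
    have "\<bar>picard e u x - eta\<bar> \<le> e * slope_bound"
      by (rule abs_picard_minus_initial_le[OF e u])
    also have "\<dots> \<le> eta / 2" using e by (simp add: small_radius_def)
    finally show ?thesis .
  qed
  then show "picard e u x \<in> {eta/2..3*eta/2}"
    unfolding abs_le_iff by auto
  show "picard e u \<in> bcontfun"
  proof (rule bcontfun_normI)
    have "0 < u s" if "s \<in> {0..e}" for s
      using u(2)[OF that] initial by auto
    then show "continuous_on UNIV (picard e u)"
      using e u by (intro continuous_on_picard) (simp_all add: small_radius_def)
    show "norm (picard e u x) \<le> 3 * eta / 2" for x
      using near[of x] initial unfolding abs_le_iff by auto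
  qed
qed

lemma integral_equation_solvable:
  assumes e: "small_radius e"
  shows "\<exists>f. continuous_on {0..e} f \<and> (\<forall>x\<in>{0..e}. f x \<in> {eta/2..3*eta/2})
           \<and> (\<forall>x\<in>{0..e}. f x = eta + integral {0..x} (slope n m beta gam f))"
proof -
  define S where "S = (PiC UNIV (\<lambda>_. {eta/2..3*eta/2}) :: (real \<Rightarrow>\<^sub>C real) set)"
  have in_S: "w \<in> S \<longleftrightarrow> (\<forall>x. apply_bcontfun w x \<in> {eta/2..3*eta/2})" for w
    unfolding S_def mem_PiC_iff by auto
  have cont: "continuous_on {0..e} (apply_bcontfun w)" for w
    by (rule continuous_on_apply_bcontfun)
  define P where "P w = Bcontfun (picard e (apply_bcontfun w))" for w
  have apply_P: "apply_bcontfun (P w) = picard e (apply_bcontfun w)" if "w \<in> S" for w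
    unfolding P_def using that in_S by (intro Bcontfun_inverse picard_in_band[OF e cont]) auto
  have "\<exists>!w\<in>S. P w = w"
  proof (rule Banach_fix)
    show "complete S" unfolding S_def complete_eq_closed by (rule closed_PiC) auto
    show "S \<noteq> {}" using initial in_S[of "const_bcontfun eta"] by auto
    show "0 \<le> e * slope_lipschitz" "e * slope_lipschitz < 1"
      using e slope_lipschitz_nonneg by (auto simp: small_radius_def)
    show "P ` S \<subseteq> S"
      using apply_P in_S picard_in_band(2)[OF e cont] by auto
    fix w w' assume w: "w \<in> S" and w': "w' \<in> S"
    show "dist (P w) (P w') \<le> e * slope_lipschitz * dist w w'"
    proof (rule dist_bound)
      fix x
      have "\<bar>picard e (apply_bcontfun w) x - picard e (apply_bcontfun w') x\<bar> \<le> e * slope_lipschitz * dist w w'"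
        using w w' in_S dist_bounded[of w _ w'] e
        by (intro abs_picard_diff_le cont) (auto simp: dist_real_def)
      then show "dist (apply_bcontfun (P w) x) (apply_bcontfun (P w') x) \<le> e * slope_lipschitz * dist w w'"
        by (simp add: apply_P w w' dist_real_def)
    qed
  qed
  then obtain w where w: "w \<in> S" "P w = w" by blast
  show ?thesis
  proof (intro exI conjI ballI)
    show "continuous_on {0..e} (apply_bcontfun w)" by (rule cont)
    fix x assume x: "x \<in> {0..e}"
    show "apply_bcontfun w x \<in> {eta/2..3*eta/2}" using w in_S by auto
    have "apply_bcontfun w x = picard e (apply_bcontfun w) x"
      using apply_P[OF w(1)] w(2) by simp
    then show "apply_bcontfun w x = eta + integral {0..x} (slope n m beta gam (apply_bcontfun w))"
      using x by (simp add: picard_def)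
  qed
qed

lemma radial_sol_exists:
  assumes "small_radius e"
  shows "\<exists>f. radial_sol n m alpha beta eta e f"
proof -
  obtain f where f: "continuous_on {0..e} f" "\<forall>x\<in>{0..e}. f x \<in> {eta/2..3*eta/2}"
      "\<forall>x\<in>{0..e}. f x = eta + integral {0..x} (slope n m beta gam f)"
    using integral_equation_solvable[OF assms] by blast
  have "0 < f s" if "s \<in> {0..e}" for s
    using f(2) that initial by fastforce
  then have "radial_sol n m alpha beta eta e f"
    using assms f by (intro radial_sol_if_integral_equation) (auto simp: small_radius_def)
  then show ?thesis by blast
qed

end

theorem lemma2p1:
  fixes n :: nat and m eta0 rho1 beta alpha :: real
  assumes "n \<ge> 3"
    and "0 < m" and "m < (real n - 2) / real n"
    and "eta0 > 0" and "rho1 > 0"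
    and "beta < m * rho1 / (real n - 2 - real n * m)"
    and "alpha = (2 * beta + rho1) / (1 - m)"
  shows "\<exists>eps>0. (\<exists>f. radial_sol n m alpha beta eta0 eps f) \<and>
           (\<forall>f g. radial_sol n m alpha beta eta0 eps f \<and> radial_sol n m alpha beta eta0 eps g
                  \<longrightarrow> (\<forall>r\<in>{0..<eps}. f r = g r))"
proof -
  have "(real n - 2) / real n < 1" using \<open>n \<ge> 3\<close> by (simp add: divide_less_eq)
  then have "m < 1" using \<open>m < (real n - 2) / real n\<close> by linarith
  then interpret radial_problem n m alpha beta eta0
    using assms by unfold_locales auto
  obtain e where e: "small_radius e" using small_radius_exists by blast
  show ?thesis
  proof (intro exI[of _ e] conjI allI impI ballI)
    show "0 < e" using e by (simp add: small_radius_def)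
    show "\<exists>f. radial_sol n m alpha beta eta0 e f" using radial_sol_exists[OF e] .
  next
    fix f g r
    assume "radial_sol n m alpha beta eta0 e f \<and> radial_sol n m alpha beta eta0 e g" "r \<in> {0..<e}"
    then show "f r = g r" using radial_sol_unique e by blast
  qed
qed

end
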